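(* Let $T$ be a finite nonempty set, let $\widehat\phi\in\mathbb{R}^{T}$, $\delta>0$, and let $\gamma_{uv}\ge 0$ ($u,v\in T$) be given numbers. Define $$\mathcal{U}_{\mathrm{SB}}=\{\phi\in[0,1]^{T}:\ |\phi_v-\widehat\phi_v|\le\delta\ \ \forall v\in T,\ \ |\phi_v-\phi_u|\le\gamma_{vu}\ \ \forall u,v\in T\},$$ and assume $\mathcal{U}_{\mathrm{SB}}\neq\emptyset$. For $u\in T$ let $\underline\phi^0_u=\max\{0,\widehat\phi_u-\delta\}$, $\bar\phi^0_u=\min\{1,\widehat\phi_u+\delta\}$, $\underline\phi_u=\min_{\phi\in\mathcal{U}_{\mathrm{SB}}}\phi_u$ and $\bar\phi_u=\max_{\phi\in\mathcal{U}_{\mathrm{SB}}}\phi_u$. Then for every $v\in T$: (i) the projection $P_v(\mathcal{U}_{\mathrm{SB}})=\{\phi_v:\phi\in\mathcal{U}_{\mathrm{SB}}\}$ equals the interval $[\underline\phi_v,\bar\phi_v]$; (ii) $\underline\phi_v\ge\max_{u\in T\setminus\{v\}}\{\underline\phi_u-\gamma_{uv}\}$ and $\bar\phi_v\le\min_{u\in T\setminus\{v\}}\{\bar\phi_u+\gamma_{uv}\}$; (iii) if moreover $\gamma_{uv}=\Gamma(\mathrm{dist}(u,v))$ for all $u,v\in T$, where $\mathrm{dist}$ is a metric on $T$ and $\Gamma:\mathbb{R}\to[0,1]$ is nondecreasing, subadditive, and satisfies $\Gamma(x)=0$ iff $x=0$, then $$\underline\phi_v=\max_{u\in T}\{\underline\phi^0_u-\gamma_{uv}\}\quad\text{and}\quad\bar\phi_v=\min_{u\in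 T}\{\bar\phi^0_u+\gamma_{vu}\}.$$
   Context: $T$ models the set of tumor voxels; $\mathrm{dist}(u,v)$ is the distance (in voxels) between voxels $u$ and $v$, a metric on $T$. For $S\subseteq\mathbb{R}^{T}$ and $I\subseteq T$, $P_I(S)=\{\phi_I:\phi\in S\}$ denotes the projection onto the coordinates in $I$, with $P_v=P_{\{v\}}$. *)

theory Defs
  imports "HOL-Analysis.Analysis"
begin

text \<open>The uncertainty set U_SB, as a set of functions on T (extensional: zero outside T,
  so that it models R^T).\<close>
definition U_SB :: "'a set \<Rightarrow> ('a \<Rightarrow> real) \<Rightarrow> real \<Rightarrow> ('a \<Rightarrow> 'a \<Rightarrow> real) \<Rightarrow> ('a \<Rightarrow> real) set" where
  "U_SB T phihat \<delta> \<gamma> = {\<phi> \<in> extensional T.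
      (\<forall>v\<in>T. 0 \<le> \<phi> v \<and> \<phi> v \<le> 1)
    \<and> (\<forall>v\<in>T. \<bar>\<phi> v - phihat v\<bar> \<le> \<delta>)
    \<and> (\<forall>u\<in>T. \<forall>v\<in>T. \<bar>\<phi> v - \<phi> u\<bar> \<le> \<gamma> v u)}"

definition proj :: "'a \<Rightarrow> ('a \<Rightarrow> real) set \<Rightarrow> real set" where
  "proj v S = (\<lambda>\<phi>. \<phi> v) ` S"

definition phi_lo :: "('a \<Rightarrow> real) set \<Rightarrow> 'a \<Rightarrow> real" where
  "phi_lo S u = Inf (proj u S)"

definition phi_hi :: "('a \<Rightarrow> real) set \<Rightarrow> 'a \<Rightarrow> real" where
  "phi_hi S u = Sup (proj u S)"

definition phi0_lo :: "('a \<Rightarrow> real) \<Rightarrow> real \<Rightarrow> 'a \<Rightarrow> real" where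
  "phi0_lo phihat \<delta> u = max 0 (phihat u - \<delta>)"

definition phi0_hi :: "('a \<Rightarrow> real) \<Rightarrow> real \<Rightarrow> 'a \<Rightarrow> real" where
  "phi0_hi phihat \<delta> u = min 1 (phihat u + \<delta>)"

definition metric_on :: "'a set \<Rightarrow> ('a \<Rightarrow> 'a \<Rightarrow> real) \<Rightarrow> bool" where
  "metric_on T d \<longleftrightarrow>
     (\<forall>x\<in>T. \<forall>y\<in>T. 0 \<le> d x y \<and> d x y = d y x \<and> (d x y = 0 \<longleftrightarrow> x = y))
   \<and> (\<forall>x\<in>T. \<forall>y\<in>T. \<forall>z\<in>T. d x z \<le> d x y + d y z)"

end

theory Submission
  imports Defs
begin

text \<open>
  Membership in U_SB is a system of bounds \<open>phi0_lo v \<le> \<phi> v \<le> phi0_hi v\<close> and difference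
  constraints \<open>\<phi> v \<le> \<phi> u + \<gamma>\<close>. Such a system is convex and is preserved by coordinatewise
  infima and suprema, so the lower and upper envelopes are themselves feasible; their convex
  combinations then realise every value between \<open>phi_lo v\<close> and \<open>phi_hi v\<close>, and the difference
  constraints pass to the envelopes, which gives (ii). When \<open>\<gamma> = \<Gamma> \<circ> dist\<close> is a pseudometric,
  the McShane-type function \<open>w \<mapsto> max\<^sub>u (phi0_lo u - \<gamma> u w)\<close> is feasible and lies below every
  feasible point, hence is the lower envelope; dually for the upper one.
\<close>

lemma mem_U_SB_iff:
  "\<phi> \<in> U_SB T phihat \<delta> \<gamma> \<longleftrightarrow> \<phi> \<in> extensional T
    \<and> (\<forall>v\<in>T. phi0_lo phihat \<delta> v \<le> \<phi> v \<and> \<phi> v \<le> phi0_hi phihat \<delta> v)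
    \<and> (\<forall>u\<in>T. \<forall>v\<in>T. \<phi> v \<le> \<phi> u + \<gamma> u v \<and> \<phi> v \<le> \<phi> u + \<gamma> v u)"
proof -
  have "(\<forall>u\<in>T. \<forall>v\<in>T. \<bar>\<phi> v - \<phi> u\<bar> \<le> \<gamma> v u)
      \<longleftrightarrow> (\<forall>u\<in>T. \<forall>v\<in>T. \<phi> v \<le> \<phi> u + \<gamma> u v \<and> \<phi> v \<le> \<phi> u + \<gamma> v u)"
    by (fastforce simp: abs_le_iff)
  then show ?thesis
    unfolding U_SB_def phi0_lo_def phi0_hi_def by (auto simp: abs_le_iff)
qed

lemma convex_combination_mem_U_SB:
  assumes "\<phi> \<in> U_SB T phihat \<delta> \<gamma>" "\<psi> \<in> U_SB T phihat \<delta> \<gamma>" "0 \<le> l" "l \<le> 1"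
  shows "restrict (\<lambda>w. (1 - l) * \<phi> w + l * \<psi> w) T \<in> U_SB T phihat \<delta> \<gamma>"
proof -
  have lower: "a \<le> (1 - l) * x + l * y" if "a \<le> x" "a \<le> y" for a x y :: real
    using convex_bound_le[of "-x" "-a" "-y" "1 - l" l] that assms(3,4) by simp
  have upper: "(1 - l) * x + l * y \<le> a" if "x \<le> a" "y \<le> a" for a x y :: real
    using convex_bound_le[of x a y "1 - l" l] that assms(3,4) by simp
  have diff: "(1 - l) * x + l * y \<le> (1 - l) * x' + l * y' + c"
    if "x \<le> x' + c" "y \<le> y' + c" for x y x' y' c :: real
    using upper[of "x - x'" c "y - y'"] that by (simp add: algebra_simps)
  show ?thesis
    using assms(1,2) unfolding mem_U_SB_iff by (auto intro!: lower upper diff)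
qed

lemma phi_lo_le: "\<phi> \<in> S \<Longrightarrow> bdd_below (proj v S) \<Longrightarrow> phi_lo S v \<le> \<phi> v"
  unfolding phi_lo_def proj_def by (rule cInf_lower) auto

lemma phi_lo_greatest: "S \<noteq> {} \<Longrightarrow> (\<And>\<phi>. \<phi> \<in> S \<Longrightarrow> b \<le> \<phi> v) \<Longrightarrow> b \<le> phi_lo S v"
  unfolding phi_lo_def proj_def by (rule cInf_greatest) auto

lemma phi_lo_eq_minimum: "\<phi> \<in> S \<Longrightarrow> (\<And>\<psi>. \<psi> \<in> S \<Longrightarrow> \<phi> v \<le> \<psi> v) \<Longrightarrow> phi_lo S v = \<phi> v"
  unfolding phi_lo_def proj_def by (rule cInf_eq_minimum) auto

lemma phi_hi_ge: "\<phi> \<in> S \<Longrightarrow> bdd_above (proj v S) \<Longrightarrow> \<phi> v \<le> phi_hi S v"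
  unfolding phi_hi_def proj_def by (rule cSup_upper) auto

lemma phi_hi_least: "S \<noteq> {} \<Longrightarrow> (\<And>\<phi>. \<phi> \<in> S \<Longrightarrow> \<phi> v \<le> b) \<Longrightarrow> phi_hi S v \<le> b"
  unfolding phi_hi_def proj_def by (rule cSup_least) auto

lemma phi_hi_eq_maximum: "\<phi> \<in> S \<Longrightarrow> (\<And>\<psi>. \<psi> \<in> S \<Longrightarrow> \<psi> v \<le> \<phi> v) \<Longrightarrow> phi_hi S v = \<phi> v"
  unfolding phi_hi_def proj_def by (rule cSup_eq_maximum) auto

lemma phi_lo_diff_le:
  assumes "S \<noteq> {}" "bdd_below (proj v S)" "\<And>\<phi>. \<phi> \<in> S \<Longrightarrow> \<phi> v \<le> \<phi> u + c"
  shows "phi_lo S v \<le> phi_lo S u + c"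
proof -
  have "phi_lo S v - c \<le> phi_lo S u"
    using assms phi_lo_le[OF _ assms(2)] by (intro phi_lo_greatest) force+
  then show ?thesis by simp
qed

lemma phi_hi_diff_le:
  assumes "S \<noteq> {}" "bdd_above (proj u S)" "\<And>\<phi>. \<phi> \<in> S \<Longrightarrow> \<phi> v \<le> \<phi> u + c"
  shows "phi_hi S v \<le> phi_hi S u + c"
  using assms phi_hi_ge[OF _ assms(2)] by (intro phi_hi_least) force+

lemma bdd_proj_U_SB:
  assumes "v \<in> T"
  shows "bdd_below (proj v (U_SB T phihat \<delta> \<gamma>))" "bdd_above (proj v (U_SB T phihat \<delta> \<gamma>))"
  using assms unfolding U_SB_def proj_def by (auto intro: bdd_belowI[of _ 0] bdd_aboveI[of _ 1])

lemma phi_lo_U_SB_diff_le: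
  assumes "U_SB T phihat \<delta> \<gamma> \<noteq> {}" "u \<in> T" "v \<in> T"
  shows "phi_lo (U_SB T phihat \<delta> \<gamma>) v \<le> phi_lo (U_SB T phihat \<delta> \<gamma>) u + \<gamma> u v"
    and "phi_lo (U_SB T phihat \<delta> \<gamma>) v \<le> phi_lo (U_SB T phihat \<delta> \<gamma>) u + \<gamma> v u"
  using assms bdd_proj_U_SB(1)[OF assms(3)]
  by (auto intro!: phi_lo_diff_le simp: mem_U_SB_iff)

lemma phi_hi_U_SB_diff_le:
  assumes "U_SB T phihat \<delta> \<gamma> \<noteq> {}" "u \<in> T" "v \<in> T"
  shows "phi_hi (U_SB T phihat \<delta> \<gamma>) v \<le> phi_hi (U_SB T phihat \<delta> \<gamma>) u + \<gamma> u v"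
    and "phi_hi (U_SB T phihat \<delta> \<gamma>) v \<le> phi_hi (U_SB T phihat \<delta> \<gamma>) u + \<gamma> v u"
  using assms bdd_proj_U_SB(2)[OF assms(2)]
  by (auto intro!: phi_hi_diff_le simp: mem_U_SB_iff)

lemma restrict_phi_lo_mem_U_SB:
  assumes "U_SB T phihat \<delta> \<gamma> \<noteq> {}" (is "?U \<noteq> {}")
  shows "restrict (phi_lo ?U) T \<in> ?U"
proof -
  obtain \<phi> where "\<phi> \<in> ?U" using assms by blast
  have "phi0_lo phihat \<delta> v \<le> phi_lo ?U v \<and> phi_lo ?U v \<le> phi0_hi phihat \<delta> v" if "v \<in> T" for v
    using phi_lo_le[OF \<open>\<phi> \<in> ?U\<close> bdd_proj_U_SB(1)[OF that]] \<open>\<phi> \<in> ?U\<close> that assms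
    by (auto intro: phi_lo_greatest simp: mem_U_SB_iff)
  then show ?thesis
    using phi_lo_U_SB_diff_le[OF assms] by (simp add: mem_U_SB_iff)
qed

lemma restrict_phi_hi_mem_U_SB:
  assumes "U_SB T phihat \<delta> \<gamma> \<noteq> {}" (is "?U \<noteq> {}")
  shows "restrict (phi_hi ?U) T \<in> ?U"
proof -
  obtain \<phi> where "\<phi> \<in> ?U" using assms by blast
  have "phi0_lo phihat \<delta> v \<le> phi_hi ?U v \<and> phi_hi ?U v \<le> phi0_hi phihat \<delta> v" if "v \<in> T" for v
    using phi_hi_ge[OF \<open>\<phi> \<in> ?U\<close> bdd_proj_U_SB(2)[OF that]] \<open>\<phi> \<in> ?U\<close> that assms
    by (auto intro: phi_hi_least simp: mem_U_SB_iff)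
  then show ?thesis
    using phi_hi_U_SB_diff_le[OF assms] by (simp add: mem_U_SB_iff)
qed

lemma proj_U_SB_eq_interval:
  assumes "U_SB T phihat \<delta> \<gamma> \<noteq> {}" (is "?U \<noteq> {}") and "v \<in> T"
  shows "proj v ?U = {phi_lo ?U v .. phi_hi ?U v}"
proof
  show "proj v ?U \<subseteq> {phi_lo ?U v .. phi_hi ?U v}"
    using phi_lo_le[OF _ bdd_proj_U_SB(1)] phi_hi_ge[OF _ bdd_proj_U_SB(2)] \<open>v \<in> T\<close>
    by (auto simp: proj_def)
next
  show "{phi_lo ?U v .. phi_hi ?U v} \<subseteq> proj v ?U"
  proof
    fix t assume t: "t \<in> {phi_lo ?U v .. phi_hi ?U v}"
    define l where "l = (if phi_lo ?U v = phi_hi ?U v then 0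
      else (t - phi_lo ?U v) / (phi_hi ?U v - phi_lo ?U v))"
    have "0 \<le> l" "l \<le> 1" "(1 - l) * phi_lo ?U v + l * phi_hi ?U v = t"
      using t by (auto simp: l_def field_simps)
    moreover note convex_combination_mem_U_SB[OF restrict_phi_lo_mem_U_SB[OF assms(1)]
        restrict_phi_hi_mem_U_SB[OF assms(1)] \<open>0 \<le> l\<close> \<open>l \<le> 1\<close>]
    ultimately show "t \<in> proj v ?U"
      unfolding proj_def using \<open>v \<in> T\<close> by (force intro: rev_image_eqI)
  qed
qed

definition pseudometric_on :: "'a set \<Rightarrow> ('a \<Rightarrow> 'a \<Rightarrow> real) \<Rightarrow> bool" where
  "pseudometric_on T d \<longleftrightarrow>
     (\<forall>x\<in>T. d x x = 0) \<and> (\<forall>x\<in>T. \<forall>y\<in>T. d x y = d y x)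
   \<and> (\<forall>x\<in>T. \<forall>y\<in>T. \<forall>z\<in>T. d x z \<le> d x y + d y z)"

lemma pseudometric_on_refl: "pseudometric_on T d \<Longrightarrow> x \<in> T \<Longrightarrow> d x x = 0"
  unfolding pseudometric_on_def by blast

lemma pseudometric_on_sym: "pseudometric_on T d \<Longrightarrow> x \<in> T \<Longrightarrow> y \<in> T \<Longrightarrow> d x y = d y x"
  unfolding pseudometric_on_def by blast

lemma pseudometric_on_triangle:
  "pseudometric_on T d \<Longrightarrow> x \<in> T \<Longrightarrow> y \<in> T \<Longrightarrow> z \<in> T \<Longrightarrow> d x z \<le> d x y + d y z"
  unfolding pseudometric_on_def by blast

lemma pseudometric_on_comp_metric:
  assumes "metric_on T d" "mono_on {0..} \<Gamma>" "\<forall>x\<ge>0. \<forall>y\<ge>0. \<Gamma> (x + y) \<le> \<Gamma> x + \<Gamma> y"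
    and "\<Gamma> 0 = 0" and "\<forall>x\<in>T. \<forall>y\<in>T. \<gamma> x y = \<Gamma> (d x y)"
  shows "pseudometric_on T \<gamma>"
  unfolding pseudometric_on_def
proof (intro conjI ballI)
  fix x y z assume "x \<in> T" "y \<in> T" "z \<in> T"
  then have "0 \<le> d x y" "0 \<le> d y z" "0 \<le> d x z" "d x z \<le> d x y + d y z"
    using assms(1) unfolding metric_on_def by blast+
  then have "\<Gamma> (d x z) \<le> \<Gamma> (d x y + d y z)"
    using assms(2) by (auto intro: mono_onD)
  also have "\<dots> \<le> \<Gamma> (d x y) + \<Gamma> (d y z)"
    using assms(3) \<open>0 \<le> d x y\<close> \<open>0 \<le> d y z\<close> by blast
  finally show "\<gamma> x z \<le> \<gamma> x y + \<gamma> y z"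
    using assms(5) \<open>x \<in> T\<close> \<open>y \<in> T\<close> \<open>z \<in> T\<close> by simp
next
  fix x y assume "x \<in> T" "y \<in> T"
  then show "\<gamma> x x = 0" "\<gamma> x y = \<gamma> y x"
    using assms(1,4,5) unfolding metric_on_def by metis+
qed

lemma Max_pseudometric_shift_le:
  assumes "finite T" "T \<noteq> {}" "pseudometric_on T d" "a \<in> T" "b \<in> T"
  shows "Max ((\<lambda>u. f u - d u a) ` T) \<le> Max ((\<lambda>u. f u - d u b) ` T) + d a b"
proof -
  have "f u - d u a \<le> Max ((\<lambda>u. f u - d u b) ` T) + d a b" if "u \<in> T" for u
  proof -
    have "f u - d u b \<le> Max ((\<lambda>u. f u - d u b) ` T)"
      using assms(1) that by (intro Max_ge) auto
    moreover have "d u b \<le> d u a + d a b"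
      using pseudometric_on_triangle[OF assms(3)] assms(4,5) that by simp
    ultimately show ?thesis by linarith
  qed
  then show ?thesis using assms(1,2) by (simp add: Max_le_iff)
qed

lemma Min_pseudometric_shift_le:
  assumes "finite T" "T \<noteq> {}" "pseudometric_on T d" "a \<in> T" "b \<in> T"
  shows "Min ((\<lambda>u. f u + d a u) ` T) \<le> Min ((\<lambda>u. f u + d b u) ` T) + d a b"
proof -
  have "Min ((\<lambda>u. f u + d a u) ` T) - d a b \<le> f u + d b u" if "u \<in> T" for u
  proof -
    have "Min ((\<lambda>u. f u + d a u) ` T) \<le> f u + d a u"
      using assms(1) that by (intro Min_le) auto
    moreover have "d a u \<le> d a b + d b u"
      using pseudometric_on_triangle[OF assms(3)] assms(4,5) that by simp
    ultimately show ?thesis by linarith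
  qed
  then have "Min ((\<lambda>u. f u + d a u) ` T) - d a b \<le> Min ((\<lambda>u. f u + d b u) ` T)"
    using assms(1,2) by (simp add: Min_ge_iff)
  then show ?thesis by simp
qed

lemma phi_lo_U_SB_eq_Max:
  assumes "finite T" "T \<noteq> {}" "U_SB T phihat \<delta> \<gamma> \<noteq> {}" (is "?U \<noteq> {}")
    and "pseudometric_on T \<gamma>" "v \<in> T"
  shows "phi_lo ?U v = Max ((\<lambda>u. phi0_lo phihat \<delta> u - \<gamma> u v) ` T)"
proof -
  define m where "m w = Max ((\<lambda>u. phi0_lo phihat \<delta> u - \<gamma> u w) ` T)" for w
  have below: "m w \<le> \<phi> w" if "\<phi> \<in> ?U" "w \<in> T" for \<phi> w
  proof -
    have "phi0_lo phihat \<delta> u - \<gamma> u w \<le> \<phi> w" if "u \<in> T" for u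
      using \<open>\<phi> \<in> ?U\<close> \<open>w \<in> T\<close> that unfolding mem_U_SB_iff by force
    then show ?thesis using assms(1,2) by (simp add: m_def Max_le_iff)
  qed
  have m_mem: "restrict m T \<in> ?U"
    unfolding mem_U_SB_iff
  proof (intro conjI ballI)
    fix w assume "w \<in> T"
    have "phi0_lo phihat \<delta> w - \<gamma> w w \<le> m w"
      unfolding m_def using assms(1) \<open>w \<in> T\<close> by (intro Max_ge) auto
    then show "phi0_lo phihat \<delta> w \<le> restrict m T w"
      using pseudometric_on_refl[OF assms(4) \<open>w \<in> T\<close>] \<open>w \<in> T\<close> by simp
    obtain \<phi> where "\<phi> \<in> ?U" using assms(3) by blast
    then show "restrict m T w \<le> phi0_hi phihat \<delta> w"
      using below[OF \<open>\<phi> \<in> ?U\<close> \<open>w \<in> T\<close>] \<open>w \<in> T\<close> by (force simp: mem_U_SB_iff)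
  next
    fix u w assume "u \<in> T" "w \<in> T"
    have "m w \<le> m u + \<gamma> w u"
      unfolding m_def by (rule Max_pseudometric_shift_le[OF assms(1,2,4) \<open>w \<in> T\<close> \<open>u \<in> T\<close>])
    then show "restrict m T w \<le> restrict m T u + \<gamma> u w" "restrict m T w \<le> restrict m T u + \<gamma> w u"
      using pseudometric_on_sym[OF assms(4) \<open>u \<in> T\<close> \<open>w \<in> T\<close>] \<open>u \<in> T\<close> \<open>w \<in> T\<close> by simp_all
  qed simp
  have "phi_lo ?U v = restrict m T v"
    using below assms(5) by (intro phi_lo_eq_minimum[OF m_mem]) simp
  then show ?thesis using assms(5) by (simp add: m_def)
qed

lemma phi_hi_U_SB_eq_Min:
  assumes "finite T" "T \<noteq> {}" "U_SB T phihat \<delta> \<gamma> \<noteq> {}" (is "?U \<noteq> {}")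
    and "pseudometric_on T \<gamma>" "v \<in> T"
  shows "phi_hi ?U v = Min ((\<lambda>u. phi0_hi phihat \<delta> u + \<gamma> v u) ` T)"
proof -
  define M where "M w = Min ((\<lambda>u. phi0_hi phihat \<delta> u + \<gamma> w u) ` T)" for w
  have above: "\<phi> w \<le> M w" if "\<phi> \<in> ?U" "w \<in> T" for \<phi> w
  proof -
    have "\<phi> w \<le> phi0_hi phihat \<delta> u + \<gamma> w u" if "u \<in> T" for u
      using \<open>\<phi> \<in> ?U\<close> \<open>w \<in> T\<close> that unfolding mem_U_SB_iff by force
    then show ?thesis using assms(1,2) by (simp add: M_def Min_ge_iff)
  qed
  have M_mem: "restrict M T \<in> ?U"
    unfolding mem_U_SB_iff
  proof (intro conjI ballI)
    fix w assume "w \<in> T"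
    have "M w \<le> phi0_hi phihat \<delta> w + \<gamma> w w"
      unfolding M_def using assms(1) \<open>w \<in> T\<close> by (intro Min_le) auto
    then show "restrict M T w \<le> phi0_hi phihat \<delta> w"
      using pseudometric_on_refl[OF assms(4) \<open>w \<in> T\<close>] \<open>w \<in> T\<close> by simp
    obtain \<phi> where "\<phi> \<in> ?U" using assms(3) by blast
    then show "phi0_lo phihat \<delta> w \<le> restrict M T w"
      using above[OF \<open>\<phi> \<in> ?U\<close> \<open>w \<in> T\<close>] \<open>w \<in> T\<close> by (force simp: mem_U_SB_iff)
  next
    fix u w assume "u \<in> T" "w \<in> T"
    have "M w \<le> M u + \<gamma> w u"
      unfolding M_def by (rule Min_pseudometric_shift_le[OF assms(1,2,4) \<open>w \<in> T\<close> \<open>u \<in> T\<close>])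
    then show "restrict M T w \<le> restrict M T u + \<gamma> u w" "restrict M T w \<le> restrict M T u + \<gamma> w u"
      using pseudometric_on_sym[OF assms(4) \<open>u \<in> T\<close> \<open>w \<in> T\<close>] \<open>u \<in> T\<close> \<open>w \<in> T\<close> by simp_all
  qed simp
  have "phi_hi ?U v = restrict M T v"
    using above assms(5) by (intro phi_hi_eq_maximum[OF M_mem]) simp
  then show ?thesis using assms(5) by (simp add: M_def)
qed

theorem proposition2p1:
  fixes T :: "'a set" and phihat :: "'a \<Rightarrow> real" and \<delta> :: real
    and \<gamma> :: "'a \<Rightarrow> 'a \<Rightarrow> real"
  assumes fin: "finite T" and ne: "T \<noteq> {}"
    and delta_pos: "\<delta> > 0"
    and gamma_nonneg: "\<forall>u\<in>T. \<forall>v\<in>T. \<gamma> u v \<ge> 0"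
    and U_ne: "U_SB T phihat \<delta> \<gamma> \<noteq> {}"
  shows "\<forall>v\<in>T.
      proj v (U_SB T phihat \<delta> \<gamma>)
        = {phi_lo (U_SB T phihat \<delta> \<gamma>) v .. phi_hi (U_SB T phihat \<delta> \<gamma>) v}
    \<and> (\<forall>u\<in>T - {v}. phi_lo (U_SB T phihat \<delta> \<gamma>) v \<ge> phi_lo (U_SB T phihat \<delta> \<gamma>) u - \<gamma> u v)
    \<and> (\<forall>u\<in>T - {v}. phi_hi (U_SB T phihat \<delta> \<gamma>) v \<le> phi_hi (U_SB T phihat \<delta> \<gamma>) u + \<gamma> u v)
    \<and> (\<forall>(dist :: 'a \<Rightarrow> 'a \<Rightarrow> real) (\<Gamma> :: real \<Rightarrow> real).
         metric_on T dist
       \<and> (\<forall>x\<ge>0. 0 \<le> \<Gamma> x \<and> \<Gamma> x \<le> 1)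
       \<and> mono_on {0..} \<Gamma>
       \<and> (\<forall>x\<ge>0. \<forall>y\<ge>0. \<Gamma> (x + y) \<le> \<Gamma> x + \<Gamma> y)
       \<and> (\<forall>x\<ge>0. \<Gamma> x = 0 \<longleftrightarrow> x = 0)
       \<and> (\<forall>u\<in>T. \<forall>w\<in>T. \<gamma> u w = \<Gamma> (dist u w))
       \<longrightarrow> phi_lo (U_SB T phihat \<delta> \<gamma>) v = Max ((\<lambda>u. phi0_lo phihat \<delta> u - \<gamma> u v) ` T)
         \<and> phi_hi (U_SB T phihat \<delta> \<gamma>) v = Min ((\<lambda>u. phi0_hi phihat \<delta> u + \<gamma> v u) ` T))"
proof (intro ballI conjI allI impI)
  fix v assume "v \<in> T"
  let ?U = "U_SB T phihat \<delta> \<gamma>"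
  show "proj v ?U = {phi_lo ?U v .. phi_hi ?U v}"
    using proj_U_SB_eq_interval[OF U_ne \<open>v \<in> T\<close>] .
  show "phi_lo ?U v \<ge> phi_lo ?U u - \<gamma> u v" if "u \<in> T - {v}" for u
    using phi_lo_U_SB_diff_le(2)[OF U_ne \<open>v \<in> T\<close>, of u] that by simp
  show "phi_hi ?U v \<le> phi_hi ?U u + \<gamma> u v" if "u \<in> T - {v}" for u
    using phi_hi_U_SB_diff_le(1)[OF U_ne _ \<open>v \<in> T\<close>, of u] that by simp
  fix dist :: "'a \<Rightarrow> 'a \<Rightarrow> real" and \<Gamma> :: "real \<Rightarrow> real"
  assume H: "metric_on T dist
       \<and> (\<forall>x\<ge>0. 0 \<le> \<Gamma> x \<and> \<Gamma> x \<le> 1)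
       \<and> mono_on {0..} \<Gamma>
       \<and> (\<forall>x\<ge>0. \<forall>y\<ge>0. \<Gamma> (x + y) \<le> \<Gamma> x + \<Gamma> y)
       \<and> (\<forall>x\<ge>0. \<Gamma> x = 0 \<longleftrightarrow> x = 0)
       \<and> (\<forall>u\<in>T. \<forall>w\<in>T. \<gamma> u w = \<Gamma> (dist u w))"
  then have "pseudometric_on T \<gamma>"
    by (intro pseudometric_on_comp_metric[of T dist \<Gamma>]) simp_all
  then show "phi_lo ?U v = Max ((\<lambda>u. phi0_lo phihat \<delta> u - \<gamma> u v) ` T)"
    and "phi_hi ?U v = Min ((\<lambda>u. phi0_hi phihat \<delta> u + \<gamma> v u) ` T)"
    by (simp_all add: phi_lo_U_SB_eq_Max phi_hi_U_SB_eq_Min fin ne U_ne \<open>v \<in> T\<close>)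
qed

end
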